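(* Let $\mathbf D$ be a regular $2^r$-run design given by distinct $b_1,\dots,b_n\in\Delta_r$ with $\operatorname{rank}(b_1,\dots,b_n)=r$, $n\ge 4$. Then there are constants $c_1,c_2,c_3$ depending only on $n$ and $r$ (not on the particular design) such that: (a) $A^{(1)}_3=c_1-A_3(\widetilde T)$; (b) $A^{(1)}_4=c_2+A_3(\widetilde T)+A_4(\widetilde T)$; (c) if moreover $b_1,b_2,b_3,b_4$ are linearly independent and $b_1+b_2\notin\{b_5,\dots,b_n\}$, $b_3+b_4\notin\{b_5,\dots,b_n\}$, then $A^{(2)}_2=c_3+A^{(12)}_2(T_{12})+A^{(34)}_2(T_{34})$.
   Context: $\Delta_r$ is the set of nonzero vectors of $\mathrm{GF}(2)^r$ (all arithmetic mod 2). "Number of $m$-subsets of a list with sum in $S$" counts $m$-element subsets of the listed (distinct) vectors whose sum lies in $S$. $A^{(1)}_m$: number of $m$-subsets of $\{b_2,b_4,b_5,\dots,b_n\}$ with sum $0$. $A^{(21)}_m$: $m$-subsets of $\{b_4,\dots,b_n\}$ with sum in $\{b_1,b_1+b_2\}$; $A^{(22)}_m$: $m$-subsets of $\{b_2,b_5,\dots,b_n\}$ with sum in $\{b_3,b_3+b_4\}$; $A^{(2)}_m=A^{(21)}_m+A^{(22)}_m$. $\widetilde T=\Delta_r\setminus\{b_2,b_4,b_5,\dots,b_n\}$; $A_m(\widetilde T)$: number of $m$-subsets of $\widetilde T$ with sum $0$. $T_{12}=\widetilde T\setminus\{b_1,b_1+b_2\}$, $T_{34}=\widetilde T\setminus\{b_3,b_3+b_4\}$;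 $A^{(12)}_2(T_{12})$: number of 2-subsets of $T_{12}$ with sum in $\{b_1,b_1+b_2\}$; $A^{(34)}_2(T_{34})$: number of 2-subsets of $T_{34}$ with sum in $\{b_3,b_3+b_4\}$. *)

theory Defs
  imports "HOL-Analysis.Analysis" "HOL-Library.Z2"
begin

text \<open>Vectors of GF(2)^r are modelled as \<open>bit ^ 'r\<close> with r = CARD('r).\<close>

definition Delta :: "(bit ^ 'r) set" where
  "Delta = UNIV - {0}"

definition nsub :: "nat \<Rightarrow> (bit ^ 'r) set \<Rightarrow> (bit ^ 'r) set \<Rightarrow> nat" where
  "nsub m X S = card {Y. Y \<subseteq> X \<and> card Y = m \<and> sum id Y \<in> S}"

definition design :: "nat \<Rightarrow> (nat \<Rightarrow> bit ^ 'r) \<Rightarrow> bool" where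
  "design n b \<longleftrightarrow> inj_on b {1..n} \<and> (\<forall>i\<in>{1..n}. b i \<in> Delta)
     \<and> vec.dim (b ` {1..n}) = CARD('r)"

definition Ttil :: "nat \<Rightarrow> (nat \<Rightarrow> bit ^ 'r) \<Rightarrow> (bit ^ 'r) set" where
  "Ttil n b = Delta - b ` ({2} \<union> {4..n})"

definition A1 :: "nat \<Rightarrow> (nat \<Rightarrow> bit ^ 'r) \<Rightarrow> nat \<Rightarrow> nat" where
  "A1 n b m = nsub m (b ` ({2} \<union> {4..n})) {0}"

definition A21 :: "nat \<Rightarrow> (nat \<Rightarrow> bit ^ 'r) \<Rightarrow> nat \<Rightarrow> nat" where
  "A21 n b m = nsub m (b ` {4..n}) {b 1, b 1 + b 2}"

definition A22 :: "nat \<Rightarrow> (nat \<Rightarrow> bit ^ 'r) \<Rightarrow> nat \<Rightarrow> nat" where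
  "A22 n b m = nsub m (b ` ({2} \<union> {5..n})) {b 3, b 3 + b 4}"

definition A2 :: "nat \<Rightarrow> (nat \<Rightarrow> bit ^ 'r) \<Rightarrow> nat \<Rightarrow> nat" where
  "A2 n b m = A21 n b m + A22 n b m"

definition AT :: "nat \<Rightarrow> (bit ^ 'r) set \<Rightarrow> nat" where
  "AT m T = nsub m T {0}"

definition T12 :: "nat \<Rightarrow> (nat \<Rightarrow> bit ^ 'r) \<Rightarrow> (bit ^ 'r) set" where
  "T12 n b = Ttil n b - {b 1, b 1 + b 2}"

definition T34 :: "nat \<Rightarrow> (nat \<Rightarrow> bit ^ 'r) \<Rightarrow> (bit ^ 'r) set" where
  "T34 n b = Ttil n b - {b 3, b 3 + b 4}"

end

theory Submission
  imports Defs "HOL-Combinatorics.Multiset_Permutations"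
begin

text \<open>
  Counting ordered tuples instead of subsets, six times the number of zero-sum 3-subsets of a
  set X of nonzero vectors is \<open>\<Sum>x y. 1\<^sub>X(x) 1\<^sub>X(y) 1\<^sub>X(x + y)\<close>, and 24 times the number of
  zero-sum 4-subsets is the analogous triple sum up to a correction for repeated entries that
  only depends on |X|. For the complement \<open>\<Delta> - S\<close> substitute \<open>1\<^sub>\<Delta> - 1\<^sub>S\<close> and expand
  multilinearly: by translation invariance of the sums over GF(2)^r, every term containing a
  factor \<open>1\<^sub>\<Delta>\<close> is a polynomial in |S| and 2^r, and the terms purely in \<open>1\<^sub>S\<close> cancel against
  the counts for S. This gives (a) and (b) with S = {b_2, b_4, ..., b_n}.
  For (c), the vectors outside the span {0, a, c, a + c} are split between U and its
  complement T; for p = a and p = a + c a pointwise inclusion-exclusion shows that the numbers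
  of pairs {x, x + p} inside U and inside T differ by a quantity determined by |U|.
\<close>

instance bit :: finite
proof
  have "(UNIV :: bit set) = {0, 1}"
    by (auto intro: bit.exhaust)
  then show "finite (UNIV :: bit set)"
    by (metis finite.emptyI finite.insertI)
qed

lemma bitvec_add_self [simp]: "(x :: bit ^ 'r) + x = 0"
  by (simp add: vec_eq_iff)

lemma bitvec_add_cancel [simp]:
  "(x :: bit ^ 'r) + (x + y) = y" "(x :: bit ^ 'r) + y + y = x"
  "(x :: bit ^ 'r) + y + x = y" "(y :: bit ^ 'r) + (x + y) = x"
  by (simp_all add: vec_eq_iff)

lemma bitvec_add_eq_0_iff: "(x :: bit ^ 'r) + y = 0 \<longleftrightarrow> x = y"
  by (metis bitvec_add_cancel(2) add_0)

lemma sum_translate: "(\<Sum>y\<in>UNIV. h (a + y)) = (\<Sum>y\<in>UNIV. h (y :: bit ^ 'r))"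
  by (rule sum.reindex_bij_witness[of _ "\<lambda>y. a + y" "\<lambda>y. a + y"]) auto

lemma card_distinct_lists_eq_fact_nsub:
  fixes X :: "(bit ^ 'r) set"
  shows "card {xs. distinct xs \<and> set xs \<subseteq> X \<and> length xs = m \<and> sum_list xs \<in> S}
    = fact m * nsub m X S"
proof -
  let ?Y = "{Y. Y \<subseteq> X \<and> card Y = m \<and> sum id Y \<in> S}"
  have sum_list_set: "distinct xs \<Longrightarrow> sum_list xs = \<Sum>(set xs)" for xs
    using sum_list_distinct_conv_sum_set[of xs id] by simp
  have lists: "{xs. distinct xs \<and> set xs \<subseteq> X \<and> length xs = m \<and> sum_list xs \<in> S}
    = (\<Union>Y\<in>?Y. permutations_of_set Y)"
    by (auto simp: permutations_of_set_def distinct_card sum_list_set)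
  have "finite ?Y"
    by simp
  then have "card (\<Union>Y\<in>?Y. permutations_of_set Y) = (\<Sum>Y\<in>?Y. card (permutations_of_set Y))"
    by (intro card_UN_disjoint) (simp_all, auto simp: permutations_of_set_def)
  also have "\<dots> = (\<Sum>Y\<in>?Y. fact m)"
    by (intro sum.cong) auto
  finally show ?thesis
    unfolding lists nsub_def by simp
qed

lemma int_card_Collect_pair:
  "int (card {(x :: 'a :: finite, y :: 'b :: finite). P x y})
    = (\<Sum>x\<in>UNIV. \<Sum>y\<in>UNIV. of_bool (P x y))"
proof -
  have "(\<Sum>x\<in>UNIV. \<Sum>y\<in>UNIV. of_bool (P x y)) = (\<Sum>(x, y)\<in>UNIV \<times> UNIV. (of_bool (P x y) :: int))"
    by (rule sum.cartesian_product)
  also have "\<dots> = (\<Sum>p\<in>UNIV. of_bool (p \<in> {(x, y). P x y}))"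
    by (simp add: UNIV_Times_UNIV case_prod_beta)
  finally show ?thesis
    by simp
qed

lemma int_card_Collect_triple:
  "int (card {(x :: 'a :: finite, y :: 'b :: finite, z :: 'c :: finite). P x y z})
    = (\<Sum>x\<in>UNIV. \<Sum>y\<in>UNIV. \<Sum>z\<in>UNIV. of_bool (P x y z))"
proof -
  have "{(x :: 'a, y :: 'b, z :: 'c). P x y z} = {(x, yz). P x (fst yz) (snd yz)}"
    by auto
  moreover have "(\<Sum>yz\<in>UNIV. of_bool (P x (fst yz) (snd yz)))
    = (\<Sum>y\<in>UNIV. \<Sum>z\<in>UNIV. (of_bool (P x y z) :: int))" for x
  proof -
    have "(\<Sum>y\<in>UNIV. \<Sum>z\<in>UNIV. (of_bool (P x y z) :: int)) = (\<Sum>(y, z)\<in>UNIV \<times> UNIV. of_bool (P x y z))"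
      by (rule sum.cartesian_product)
    then show ?thesis
      by (simp add: UNIV_Times_UNIV case_prod_beta)
  qed
  ultimately show ?thesis
    by (simp only: int_card_Collect_pair)
qed

lemma two_nsub_2_eq_sum_indicator:
  fixes X :: "(bit ^ 'r) set"
  assumes "p \<noteq> 0"
  shows "2 * int (nsub 2 X {p}) = (\<Sum>x\<in>UNIV. indicator X x * indicator X (x + p))"
proof -
  let ?L = "{xs. distinct xs \<and> set xs \<subseteq> X \<and> length xs = 2 \<and> sum_list xs \<in> {p}}"
  let ?A = "{x. x \<in> X \<and> x + p \<in> X}"
  have lists: "?L = (\<lambda>x. [x, x + p]) ` ?A"
  proof (intro equalityI subsetI)
    fix xs assume xs: "xs \<in> ?L"
    then obtain x y where "xs = [x, y]"
      by (auto simp: length_Suc_conv numeral_eq_Suc)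
    moreover from xs this have "y = x + p"
      by auto
    ultimately show "xs \<in> (\<lambda>x. [x, x + p]) ` ?A"
      using xs by auto
  next
    fix xs assume "xs \<in> (\<lambda>x. [x, x + p]) ` ?A"
    then show "xs \<in> ?L"
      using assms by (auto simp: add.assoc[symmetric] bitvec_add_eq_0_iff)
  qed
  have "fact 2 * nsub 2 X {p} = card ((\<lambda>x. [x, x + p]) ` ?A)"
    using card_distinct_lists_eq_fact_nsub[of X 2 "{p}"] lists by simp
  also have "\<dots> = card ?A"
    by (rule card_image) (auto intro: inj_onI)
  finally have "2 * nsub 2 X {p} = card ?A"
    by (simp add: numeral_2_eq_2)
  then show ?thesis
    by (simp add: indicator_def Int_def)
qed

definition corr3 :: "(bit ^ 'r \<Rightarrow> int) \<Rightarrow> (bit ^ 'r \<Rightarrow> int) \<Rightarrow> (bit ^ 'r \<Rightarrow> int) \<Rightarrow> int" where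
  "corr3 f g h = (\<Sum>x\<in>UNIV. \<Sum>y\<in>UNIV. f x * g y * h (x + y))"

definition corr4 ::
    "(bit ^ 'r \<Rightarrow> int) \<Rightarrow> (bit ^ 'r \<Rightarrow> int) \<Rightarrow> (bit ^ 'r \<Rightarrow> int) \<Rightarrow> (bit ^ 'r \<Rightarrow> int) \<Rightarrow> int" where
  "corr4 f g h k = (\<Sum>x\<in>UNIV. \<Sum>y\<in>UNIV. \<Sum>z\<in>UNIV. f x * g y * h z * k (x + y + z))"

lemma six_nsub_3_zero_eq_corr3:
  fixes X :: "(bit ^ 'r) set"
  assumes "0 \<notin> X"
  shows "6 * int (nsub 3 X {0}) = corr3 (indicator X) (indicator X) (indicator X)"
proof -
  let ?L = "{xs. distinct xs \<and> set xs \<subseteq> X \<and> length xs = 3 \<and> sum_list xs \<in> {0}}"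
  let ?A = "{(x, y). x \<in> X \<and> y \<in> X \<and> x + y \<in> X}"
  have lists: "?L = (\<lambda>(x, y). [x, y, x + y]) ` ?A"
  proof (intro equalityI subsetI)
    fix xs assume xs: "xs \<in> ?L"
    then obtain x y z where "xs = [x, y, z]"
      by (auto simp: length_Suc_conv numeral_eq_Suc)
    moreover from xs this have "z = x + y"
      by (auto simp: add.assoc[symmetric] bitvec_add_eq_0_iff)
    ultimately show "xs \<in> (\<lambda>(x, y). [x, y, x + y]) ` ?A"
      using xs by auto
  next
    fix xs assume "xs \<in> (\<lambda>(x, y). [x, y, x + y]) ` ?A"
    then show "xs \<in> ?L"
      using assms by (auto simp: add.assoc[symmetric] bitvec_add_eq_0_iff)
  qed
  have "fact 3 * nsub 3 X {0} = card ((\<lambda>(x, y). [x, y, x + y]) ` ?A)"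
    using card_distinct_lists_eq_fact_nsub[of X 3 "{0}"] lists by simp
  also have "\<dots> = card ?A"
    by (rule card_image) (auto intro: inj_onI)
  finally have "6 * int (nsub 3 X {0}) = int (card ?A)"
    by (simp add: fact_numeral)
  also have "\<dots> = corr3 (indicator X) (indicator X) (indicator X)"
    unfolding corr3_def int_card_Collect_pair indicator_def by (intro sum.cong refl) auto
  finally show ?thesis .
qed

lemma twentyfour_nsub_4_zero_eq_sum:
  fixes X :: "(bit ^ 'r) set"
  assumes "0 \<notin> X"
  shows "24 * int (nsub 4 X {0}) = (\<Sum>x\<in>UNIV. \<Sum>y\<in>UNIV. \<Sum>z\<in>UNIV.
     indicator X x * indicator X y * indicator X z * indicator X (x + y + z)
       * of_bool (x \<noteq> y \<and> x \<noteq> z \<and> y \<noteq> z))"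
proof -
  let ?L = "{xs. distinct xs \<and> set xs \<subseteq> X \<and> length xs = 4 \<and> sum_list xs \<in> {0}}"
  let ?A = "{(x, y, z). x \<in> X \<and> y \<in> X \<and> z \<in> X \<and> x + y + z \<in> X \<and> x \<noteq> y \<and> x \<noteq> z \<and> y \<noteq> z}"
  have lists: "?L = (\<lambda>(x, y, z). [x, y, z, x + y + z]) ` ?A"
  proof (intro equalityI subsetI)
    fix xs assume xs: "xs \<in> ?L"
    then obtain x y z w where "xs = [x, y, z, w]"
      by (auto simp: length_Suc_conv numeral_eq_Suc)
    moreover from xs this have "w = x + y + z"
      by (auto simp: add.assoc[symmetric] bitvec_add_eq_0_iff)
    ultimately show "xs \<in> (\<lambda>(x, y, z). [x, y, z, x + y + z]) ` ?A"
      using xs by (auto intro!: rev_image_eqI[of "(x, y, z)"])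
  next
    fix xs assume "xs \<in> (\<lambda>(x, y, z). [x, y, z, x + y + z]) ` ?A"
    then show "xs \<in> ?L"
      by (auto simp: add.assoc[symmetric] bitvec_add_eq_0_iff)
  qed
  have "fact 4 * nsub 4 X {0} = card ((\<lambda>(x, y, z). [x, y, z, x + y + z]) ` ?A)"
    using card_distinct_lists_eq_fact_nsub[of X 4 "{0}"] lists by simp
  also have "\<dots> = card ?A"
    by (rule card_image) (auto intro: inj_onI)
  finally have "24 * int (nsub 4 X {0}) = int (card ?A)"
    by (simp add: fact_numeral)
  also have "\<dots> = (\<Sum>x\<in>UNIV. \<Sum>y\<in>UNIV. \<Sum>z\<in>UNIV.
     indicator X x * indicator X y * indicator X z * indicator X (x + y + z)
       * of_bool (x \<noteq> y \<and> x \<noteq> z \<and> y \<noteq> z))"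
    unfolding int_card_Collect_triple indicator_def by (intro sum.cong refl) auto
  finally show ?thesis .
qed

lemma corr3_swap12: "corr3 f g h = corr3 g f h"
  unfolding corr3_def by (subst sum.swap) (simp add: mult_ac add.commute)

lemma corr3_swap23: "corr3 f g h = corr3 f h g"
  unfolding corr3_def
proof (rule sum.cong[OF refl])
  fix x
  have "(\<Sum>y\<in>UNIV. f x * g y * h (x + y)) = (\<Sum>y\<in>UNIV. f x * g (x + y) * h (x + (x + y)))"
    by (rule sum_translate[symmetric])
  then show "(\<Sum>y\<in>UNIV. f x * g y * h (x + y)) = (\<Sum>y\<in>UNIV. f x * h y * g (x + y))"
    by (simp add: mult_ac)
qed

lemma corr4_swap12: "corr4 f g h k = corr4 g f h k"
  unfolding corr4_def by (subst sum.swap) (simp add: mult_ac add.commute)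

lemma corr4_swap23: "corr4 f g h k = corr4 f h g k"
  unfolding corr4_def by (rule sum.cong[OF refl], subst sum.swap) (simp add: mult_ac add_ac)

lemma corr4_swap34: "corr4 f g h k = corr4 f g k h"
  unfolding corr4_def
proof (rule sum.cong[OF refl], rule sum.cong[OF refl])
  fix x y
  have "(\<Sum>z\<in>UNIV. f x * g y * h z * k (x + y + z))
    = (\<Sum>z\<in>UNIV. f x * g y * h (x + y + z) * k (x + y + (x + y + z)))"
    by (rule sum_translate[symmetric])
  then show "(\<Sum>z\<in>UNIV. f x * g y * h z * k (x + y + z)) = (\<Sum>z\<in>UNIV. f x * g y * k z * h (x + y + z))"
    by (simp only: bitvec_add_cancel(1)) (simp add: mult_ac)
qed

lemma corr3_diff:
  "corr3 (\<lambda>x. f x - f' x) g h = corr3 f g h - corr3 f' g h"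
  "corr3 f (\<lambda>x. g x - g' x) h = corr3 f g h - corr3 f g' h"
  "corr3 f g (\<lambda>x. h x - h' x) = corr3 f g h - corr3 f g h'"
  unfolding corr3_def by (simp_all add: algebra_simps sum_subtractf)

lemma corr4_diff:
  "corr4 (\<lambda>x. f x - f' x) g h k = corr4 f g h k - corr4 f' g h k"
  "corr4 f (\<lambda>x. g x - g' x) h k = corr4 f g h k - corr4 f g' h k"
  "corr4 f g (\<lambda>x. h x - h' x) k = corr4 f g h k - corr4 f g h' k"
  "corr4 f g h (\<lambda>x. k x - k' x) = corr4 f g h k - corr4 f g h k'"
  unfolding corr4_def by (simp_all add: algebra_simps sum_subtractf)

(* The sums below are manipulated as polynomial identities in indicator values; the library
   rules that restrict them to the support of an indicator get in the way. *)
declare sum_mult_indicator [simp del] sum_indicator_mult [simp del]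

lemma indicator_mult_self [simp]: "indicator X x * indicator X x = (indicator X x :: int)"
  by (simp add: indicator_def)

lemma sum_UNIV_indicator: "(\<Sum>x\<in>UNIV. indicator S x :: int) = int (card (S :: 'a :: finite set))"
  by (simp add: indicator_def)

lemma sum_of_bool_eq_times: "(\<Sum>y\<in>UNIV. of_bool (y = (a :: 'a :: finite)) * (h y :: int)) = h a"
proof -
  have "of_bool (y = a) * h y = (if a = y then h y else 0)" for y
    by auto
  then show ?thesis
    by (simp add: sum.delta')
qed

lemma sum_indicator_mult_indicator:
  "(\<Sum>x\<in>UNIV. \<Sum>y\<in>UNIV. indicator S x * indicator S y :: int) = int (card (S :: 'a :: finite set)) ^ 2"
  by (simp add: sum_product[symmetric] sum_UNIV_indicator power2_eq_square)

lemma sum_indicator_mult_indicator_diagonal: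
  "(\<Sum>x\<in>UNIV. \<Sum>y\<in>UNIV. indicator S x * indicator S y * of_bool (x = y) :: int)
    = int (card (S :: 'a :: finite set))"
proof -
  have "(\<Sum>x\<in>UNIV. \<Sum>y\<in>UNIV. indicator S x * indicator S y * of_bool (x = y) :: int)
    = (\<Sum>x\<in>UNIV. \<Sum>y\<in>UNIV. of_bool (y = x) * (indicator S x * indicator S y))"
    by (simp add: mult_ac eq_commute)
  also have "\<dots> = (\<Sum>x\<in>UNIV. indicator S x)"
    by (simp only: sum_of_bool_eq_times indicator_mult_self)
  finally show ?thesis
    by (simp add: sum_UNIV_indicator)
qed

lemma sum_indicator_mult_indicator_off_diagonal:
  "(\<Sum>x\<in>UNIV. \<Sum>y\<in>UNIV. of_bool (x \<noteq> y) * (indicator S x * indicator S y) :: int)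
    = int (card (S :: 'a :: finite set)) ^ 2 - int (card S)"
proof -
  have "(\<Sum>x\<in>UNIV. \<Sum>y\<in>UNIV. of_bool (x \<noteq> y) * (indicator S x * indicator S y) :: int)
    = (\<Sum>x\<in>UNIV. \<Sum>y\<in>UNIV. indicator S x * indicator S y - indicator S x * indicator S y * of_bool (x = y))"
    by (intro sum.cong refl) auto
  then show ?thesis
    by (simp only: sum_subtractf sum_indicator_mult_indicator sum_indicator_mult_indicator_diagonal)
qed

lemma card_Delta: "card (Delta :: (bit ^ 'r) set) = CARD(bit ^ 'r) - 1"
  by (simp add: Delta_def card_Diff_subset)

lemma indicator_Delta_add: "indicator Delta (x + y) = 1 - (of_bool (x = y) :: int)"
  by (simp add: indicator_def Delta_def bitvec_add_eq_0_iff)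

lemma sum_indicator_Delta_mult_translate:
  "(\<Sum>z\<in>UNIV. indicator Delta z * indicator Delta (c + z))
    = int CARD(bit ^ 'r) - 2 + of_bool (c = (0 :: bit ^ 'r))"
proof -
  have "indicator Delta z * indicator Delta (c + z)
    = 1 - of_bool (z = 0) - of_bool (z = c) + of_bool (z = 0) * (of_bool (0 = c) :: int)" for z
    by (auto simp: indicator_def Delta_def bitvec_add_eq_0_iff eq_commute[of _ c])
  then show ?thesis
    by (simp add: sum.distrib sum_subtractf of_bool_def eq_commute[of 0 c])
qed

lemma corr3_indicator_Delta_Delta:
  fixes S :: "(bit ^ 'r) set"
  assumes "S \<subseteq> Delta"
  shows "corr3 (indicator S) (indicator Delta) (indicator Delta) = int (card S) * (int CARD(bit ^ 'r) - 2)"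
proof -
  have "corr3 (indicator S) (indicator Delta) (indicator Delta)
    = (\<Sum>x\<in>UNIV. indicator S x * (\<Sum>y\<in>UNIV. indicator Delta y * indicator Delta (x + y)))"
    unfolding corr3_def by (simp only: sum_distrib_left mult.assoc)
  also have "\<dots> = (\<Sum>x\<in>UNIV. indicator S x * (int CARD(bit ^ 'r) - 2 + of_bool (x = 0)))"
    by (simp only: sum_indicator_Delta_mult_translate)
  also have "\<dots> = (\<Sum>x\<in>UNIV. indicator S x * (int CARD(bit ^ 'r) - 2))"
    using assms by (intro sum.cong refl) (auto simp: Delta_def indicator_def)
  finally show ?thesis
    by (simp add: sum_distrib_right[symmetric] sum_UNIV_indicator)
qed

lemma corr3_indicator_indicator_Delta:
  "corr3 (indicator S) (indicator S) (indicator Delta) = int (card S) ^ 2 - int (card S)"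
proof -
  have "corr3 (indicator S) (indicator S) (indicator Delta)
    = (\<Sum>x\<in>UNIV. \<Sum>y\<in>UNIV. indicator S x * indicator S y - indicator S x * indicator S y * of_bool (x = y))"
    unfolding corr3_def indicator_Delta_add by (simp add: algebra_simps)
  then show ?thesis
    by (simp only: sum_subtractf sum_indicator_mult_indicator sum_indicator_mult_indicator_diagonal)
qed

lemma corr4_indicator_Delta_Delta_Delta:
  fixes S :: "(bit ^ 'r) set"
  assumes "S \<subseteq> Delta"
  shows "corr4 (indicator S) (indicator Delta) (indicator Delta) (indicator Delta)
    = int (card S) * ((int CARD(bit ^ 'r) - 2) * (int CARD(bit ^ 'r) - 1) + 1)"
proof -
  let ?N = "int CARD(bit ^ 'r)"
  have inner: "(\<Sum>y\<in>UNIV. indicator Delta y * (\<Sum>z\<in>UNIV. indicator Delta z * indicator Delta (x + y + z)))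
    = (?N - 2) * (?N - 1) + indicator Delta x" for x :: "bit ^ 'r"
  proof -
    have "(\<Sum>y\<in>UNIV. indicator Delta y * (\<Sum>z\<in>UNIV. indicator Delta z * indicator Delta (x + y + z)))
      = (\<Sum>y\<in>UNIV. indicator Delta y * (?N - 2) + of_bool (y = x) * indicator Delta y)"
      by (rule sum.cong[OF refl], simp only: sum_indicator_Delta_mult_translate bitvec_add_eq_0_iff)
        (simp add: algebra_simps eq_commute)
    also have "\<dots> = (\<Sum>y\<in>UNIV. indicator Delta (y :: bit ^ 'r)) * (?N - 2) + indicator Delta x"
      by (simp only: sum.distrib sum_of_bool_eq_times sum_distrib_right)
    finally show ?thesis
      by (simp add: sum_UNIV_indicator card_Delta mult.commute)
  qed
  have "corr4 (indicator S) (indicator Delta) (indicator Delta) (indicator Delta)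
    = (\<Sum>x\<in>UNIV. indicator S x * (\<Sum>y\<in>UNIV. indicator Delta y
        * (\<Sum>z\<in>UNIV. indicator Delta z * indicator Delta (x + y + z))))"
    unfolding corr4_def by (simp only: sum_distrib_left mult.assoc)
  also have "\<dots> = (\<Sum>x\<in>UNIV. indicator S x * ((?N - 2) * (?N - 1) + indicator Delta x))"
    by (simp only: inner)
  also have "\<dots> = (\<Sum>x\<in>UNIV. indicator S x * ((?N - 2) * (?N - 1) + 1))"
    using assms by (intro sum.cong refl) (auto simp: indicator_def)
  finally show ?thesis
    by (simp add: sum_distrib_right[symmetric] sum_UNIV_indicator)
qed

lemma corr4_indicator_indicator_Delta_Delta:
  fixes S :: "(bit ^ 'r) set"
  shows "corr4 (indicator S) (indicator S) (indicator Delta) (indicator Delta)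
    = int (card S) ^ 2 * (int CARD(bit ^ 'r) - 2) + int (card S)"
proof -
  have "corr4 (indicator S) (indicator S) (indicator Delta) (indicator Delta)
    = (\<Sum>x\<in>UNIV. \<Sum>y\<in>UNIV. indicator S x * indicator S y
        * (\<Sum>z\<in>UNIV. indicator Delta z * indicator Delta (x + y + z)))"
    unfolding corr4_def by (simp only: sum_distrib_left mult.assoc)
  also have "\<dots> = (\<Sum>x\<in>UNIV. \<Sum>y\<in>UNIV. indicator S x * indicator S y * (int CARD(bit ^ 'r) - 2)
      + indicator S x * indicator S y * of_bool (x = y))"
    by (simp only: sum_indicator_Delta_mult_translate bitvec_add_eq_0_iff) (simp add: algebra_simps)
  finally show ?thesis
    by (simp only: sum.distrib sum_indicator_mult_indicator_diagonal sum_distrib_right[symmetric]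
        sum_indicator_mult_indicator)
qed

lemma corr4_indicator_indicator_indicator_Delta:
  "corr4 (indicator S) (indicator S) (indicator S) (indicator Delta)
    = int (card S) ^ 3 - corr3 (indicator S) (indicator S) (indicator S)"
proof -
  have "corr4 (indicator S) (indicator S) (indicator S) (indicator Delta)
    = (\<Sum>x\<in>UNIV. \<Sum>y\<in>UNIV. \<Sum>z\<in>UNIV. indicator S x * indicator S y * indicator S z
        - of_bool (z = x + y) * (indicator S x * indicator S y * indicator S z))"
    unfolding corr4_def indicator_Delta_add by (simp add: algebra_simps eq_commute)
  also have "\<dots> = (\<Sum>x\<in>UNIV. \<Sum>y\<in>UNIV. \<Sum>z\<in>UNIV. indicator S x * indicator S y * indicator S z)
      - corr3 (indicator S) (indicator S) (indicator S)"
    unfolding corr3_def by (simp only: sum_subtractf sum_of_bool_eq_times)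
  also have "(\<Sum>x\<in>UNIV. \<Sum>y\<in>UNIV. \<Sum>z\<in>UNIV. indicator S x * indicator S y * indicator S z)
      = int (card S) ^ 3"
    by (simp add: sum_distrib_left[symmetric] sum_distrib_right[symmetric] sum_UNIV_indicator power3_eq_cube)
  finally show ?thesis .
qed

lemma corr4_indicator_eq_distinct_plus:
  fixes S :: "(bit ^ 'r) set"
  shows "corr4 (indicator S) (indicator S) (indicator S) (indicator S)
    = (\<Sum>x\<in>UNIV. \<Sum>y\<in>UNIV. \<Sum>z\<in>UNIV.
        indicator S x * indicator S y * indicator S z * indicator S (x + y + z)
          * of_bool (x \<noteq> y \<and> x \<noteq> z \<and> y \<noteq> z))
      + 3 * int (card S) ^ 2 - 2 * int (card S)"
proof -
  let ?D = "\<lambda>x y z. indicator S x * indicator S y * indicator S z * indicator S (x + y + z)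
    * (of_bool (x \<noteq> y \<and> x \<noteq> z \<and> y \<noteq> z) :: int)"
  \<comment> \<open>a tuple with a repeated entry has x = y, or z equals x or y; then x + y + z is the remaining entry\<close>
  have split: "indicator S x * indicator S y * indicator S z * indicator S (x + y + z) = ?D x y z
      + of_bool (y = x) * (indicator S x * indicator S z)
      + of_bool (z = x) * (of_bool (x \<noteq> y) * (indicator S x * indicator S y))
      + of_bool (z = y) * (of_bool (x \<noteq> y) * (indicator S x * indicator S y))" for x y z
    by (cases "x = y"; cases "z = x"; cases "z = y") (auto simp: indicator_def)
  have diagonal: "(\<Sum>x\<in>UNIV. \<Sum>y\<in>UNIV. \<Sum>z\<in>UNIV. of_bool (y = x) * (indicator S x * indicator S z) :: int)
      = (\<Sum>x\<in>UNIV. \<Sum>y\<in>UNIV. of_bool (y = x) * (\<Sum>z\<in>UNIV. indicator S x * indicator S z))"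
    by (simp only: sum_distrib_left)
  have "corr4 (indicator S) (indicator S) (indicator S) (indicator S)
      = (\<Sum>x\<in>UNIV. \<Sum>y\<in>UNIV. \<Sum>z\<in>UNIV. ?D x y z
          + of_bool (y = x) * (indicator S x * indicator S z)
          + of_bool (z = x) * (of_bool (x \<noteq> y) * (indicator S x * indicator S y))
          + of_bool (z = y) * (of_bool (x \<noteq> y) * (indicator S x * indicator S y)))"
    unfolding corr4_def by (intro sum.cong refl split)
  also have "\<dots> = (\<Sum>x\<in>UNIV. \<Sum>y\<in>UNIV. \<Sum>z\<in>UNIV. ?D x y z) + int (card S) ^ 2
        + (int (card S) ^ 2 - int (card S)) + (int (card S) ^ 2 - int (card S))"
    by (simp only: sum.distrib diagonal sum_of_bool_eq_times sum_indicator_mult_indicator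
        sum_indicator_mult_indicator_off_diagonal)
  finally show ?thesis
    by simp
qed

lemma twentyfour_nsub_4_zero_eq_corr4:
  fixes X :: "(bit ^ 'r) set"
  assumes "0 \<notin> X"
  shows "24 * int (nsub 4 X {0})
    = corr4 (indicator X) (indicator X) (indicator X) (indicator X) - 3 * int (card X) ^ 2 + 2 * int (card X)"
  using twentyfour_nsub_4_zero_eq_sum[OF assms] corr4_indicator_eq_distinct_plus[of X] by simp

lemma indicator_Delta_diff:
  "S \<subseteq> Delta \<Longrightarrow> indicator (Delta - S) = (\<lambda>x. indicator Delta x - (indicator S x :: int))"
  by (auto simp: indicator_def fun_eq_iff)

lemma corr3_indicator_complement:
  fixes S :: "(bit ^ 'r) set"
  assumes "S \<subseteq> Delta"
  shows "corr3 (indicator (Delta - S)) (indicator (Delta - S)) (indicator (Delta - S))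
    = corr3 (indicator (Delta :: (bit ^ 'r) set)) (indicator Delta) (indicator Delta)
      - 3 * (int (card S) * (int CARD(bit ^ 'r) - 2)) + 3 * (int (card S) ^ 2 - int (card S))
      - corr3 (indicator S) (indicator S) (indicator S)"
proof -
  let ?d = "indicator (Delta :: (bit ^ 'r) set)" and ?f = "indicator S"
  have "corr3 (indicator (Delta - S)) (indicator (Delta - S)) (indicator (Delta - S))
    = corr3 ?d ?d ?d - corr3 ?d ?d ?f - corr3 ?d ?f ?d + corr3 ?d ?f ?f
      - corr3 ?f ?d ?d + corr3 ?f ?d ?f + corr3 ?f ?f ?d - corr3 ?f ?f ?f"
    unfolding indicator_Delta_diff[OF assms] corr3_diff by (simp add: algebra_simps)
  moreover have "corr3 ?d ?d ?f = corr3 ?f ?d ?d" "corr3 ?d ?f ?d = corr3 ?f ?d ?d"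
    "corr3 ?d ?f ?f = corr3 ?f ?f ?d" "corr3 ?f ?d ?f = corr3 ?f ?f ?d"
    by (metis corr3_swap12 corr3_swap23)+
  ultimately show ?thesis
    using corr3_indicator_Delta_Delta[OF assms] corr3_indicator_indicator_Delta[of S] by simp
qed

lemma corr4_indicator_complement:
  fixes S :: "(bit ^ 'r) set"
  assumes "S \<subseteq> Delta"
  shows "corr4 (indicator (Delta - S)) (indicator (Delta - S)) (indicator (Delta - S)) (indicator (Delta - S))
    = corr4 (indicator (Delta :: (bit ^ 'r) set)) (indicator Delta) (indicator Delta) (indicator Delta)
      - 4 * (int (card S) * ((int CARD(bit ^ 'r) - 2) * (int CARD(bit ^ 'r) - 1) + 1))
      + 6 * (int (card S) ^ 2 * (int CARD(bit ^ 'r) - 2) + int (card S))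
      - 4 * (int (card S) ^ 3 - corr3 (indicator S) (indicator S) (indicator S))
      + corr4 (indicator S) (indicator S) (indicator S) (indicator S)"
proof -
  let ?d = "indicator (Delta :: (bit ^ 'r) set)" and ?f = "indicator S"
  have expand: "corr4 (indicator (Delta - S)) (indicator (Delta - S)) (indicator (Delta - S)) (indicator (Delta - S))
    = corr4 ?d ?d ?d ?d
      - corr4 ?f ?d ?d ?d - corr4 ?d ?f ?d ?d - corr4 ?d ?d ?f ?d - corr4 ?d ?d ?d ?f
      + corr4 ?f ?f ?d ?d + corr4 ?f ?d ?f ?d + corr4 ?f ?d ?d ?f
      + corr4 ?d ?f ?f ?d + corr4 ?d ?f ?d ?f + corr4 ?d ?d ?f ?f
      - corr4 ?f ?f ?f ?d - corr4 ?f ?f ?d ?f - corr4 ?f ?d ?f ?f - corr4 ?d ?f ?f ?f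
      + corr4 ?f ?f ?f ?f"
    unfolding indicator_Delta_diff[OF assms] corr4_diff by (simp add: algebra_simps)
  have s1: "corr4 ?d ?f ?d ?d = corr4 ?f ?d ?d ?d" by (rule corr4_swap12)
  have s2: "corr4 ?d ?d ?f ?d = corr4 ?f ?d ?d ?d" using corr4_swap23[of ?d ?d ?f ?d] s1 by simp
  have s3: "corr4 ?d ?d ?d ?f = corr4 ?f ?d ?d ?d" using corr4_swap34[of ?d ?d ?d ?f] s2 by simp
  have t1: "corr4 ?f ?d ?f ?d = corr4 ?f ?f ?d ?d" by (rule corr4_swap23)
  have t2: "corr4 ?f ?d ?d ?f = corr4 ?f ?f ?d ?d" using corr4_swap34[of ?f ?d ?d ?f] t1 by simp
  have t3: "corr4 ?d ?f ?f ?d = corr4 ?f ?f ?d ?d" using corr4_swap12[of ?d ?f ?f ?d] t1 by simp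
  have t4: "corr4 ?d ?f ?d ?f = corr4 ?f ?f ?d ?d" using corr4_swap12[of ?d ?f ?d ?f] t2 by simp
  have t5: "corr4 ?d ?d ?f ?f = corr4 ?f ?f ?d ?d" using corr4_swap23[of ?d ?d ?f ?f] t4 by simp
  have u1: "corr4 ?f ?f ?d ?f = corr4 ?f ?f ?f ?d" by (rule corr4_swap34)
  have u2: "corr4 ?f ?d ?f ?f = corr4 ?f ?f ?f ?d" using corr4_swap23[of ?f ?d ?f ?f] u1 by simp
  have u3: "corr4 ?d ?f ?f ?f = corr4 ?f ?f ?f ?d" using corr4_swap12[of ?d ?f ?f ?f] u2 by simp
  show ?thesis
    unfolding expand s1 s2 s3 t1 t2 t3 t4 t5 u1 u2 u3 corr4_indicator_Delta_Delta_Delta[OF assms]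
      corr4_indicator_indicator_Delta_Delta corr4_indicator_indicator_indicator_Delta
    by simp
qed

lemma int_card_Delta_diff:
  fixes S :: "(bit ^ 'r) set"
  assumes "S \<subseteq> Delta"
  shows "int (card (Delta - S)) = int CARD(bit ^ 'r) - 1 - int (card S)"
proof -
  have "card (Delta - S) = card (Delta :: (bit ^ 'r) set) - card S" "card S \<le> card (Delta :: (bit ^ 'r) set)"
    using assms by (simp_all add: card_Diff_subset card_mono finite_subset)
  moreover have "CARD(bit ^ 'r) \<ge> 1"
    by (simp add: Suc_le_eq)
  ultimately show ?thesis
    using card_Delta[where 'r = 'r] by linarith
qed

lemma six_nsub_3_zero_complement:
  fixes S :: "(bit ^ 'r) set"
  assumes "S \<subseteq> Delta"
  shows "6 * (int (nsub 3 S {0}) + int (nsub 3 (Delta - S) {0}))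
    = (int CARD(bit ^ 'r) - 1) * (int CARD(bit ^ 'r) - 2) - 3 * int (card S) * int (card (Delta - S))"
proof -
  have S: "6 * int (nsub 3 S {0}) = corr3 (indicator S) (indicator S) (indicator S)"
    using assms by (intro six_nsub_3_zero_eq_corr3) (auto simp: Delta_def)
  have T: "6 * int (nsub 3 (Delta - S) {0})
      = corr3 (indicator (Delta - S)) (indicator (Delta - S)) (indicator (Delta - S))"
    by (intro six_nsub_3_zero_eq_corr3) (simp add: Delta_def)
  have Delta: "corr3 (indicator (Delta :: (bit ^ 'r) set)) (indicator Delta) (indicator Delta)
      = (int CARD(bit ^ 'r) - 1) * (int CARD(bit ^ 'r) - 2)"
    using corr3_indicator_Delta_Delta[of "Delta :: (bit ^ 'r) set"] int_card_Delta_diff[of "{} :: (bit ^ 'r) set"]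
    by simp
  show ?thesis
    unfolding distrib_left S T corr3_indicator_complement[OF assms] Delta int_card_Delta_diff[OF assms]
    by (simp add: algebra_simps power2_eq_square)
qed

lemma twentyfour_nsub_4_zero_complement:
  fixes S :: "(bit ^ 'r) set"
  assumes "S \<subseteq> Delta"
  shows "24 * (int (nsub 4 S {0}) - int (nsub 3 (Delta - S) {0}) - int (nsub 4 (Delta - S) {0}))
    = 4 * int (card S) ^ 3 - 6 * int CARD(bit ^ 'r) * int (card S) ^ 2
      + (4 * int CARD(bit ^ 'r) ^ 2 - 6 * int CARD(bit ^ 'r) + 4) * int (card S)
      - int CARD(bit ^ 'r) * (int CARD(bit ^ 'r) - 1) * (int CARD(bit ^ 'r) - 2)"
proof -
  let ?N = "int CARD(bit ^ 'r)"
  have S: "24 * int (nsub 4 S {0})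
      = corr4 (indicator S) (indicator S) (indicator S) (indicator S) - 3 * int (card S) ^ 2 + 2 * int (card S)"
    using assms by (intro twentyfour_nsub_4_zero_eq_corr4) (auto simp: Delta_def)
  have T3: "24 * int (nsub 3 (Delta - S) {0})
      = 4 * corr3 (indicator (Delta - S)) (indicator (Delta - S)) (indicator (Delta - S))"
    using six_nsub_3_zero_eq_corr3[of "Delta - S"] by (simp add: Delta_def)
  have T4: "24 * int (nsub 4 (Delta - S) {0})
      = corr4 (indicator (Delta - S)) (indicator (Delta - S)) (indicator (Delta - S)) (indicator (Delta - S))
        - 3 * int (card (Delta - S)) ^ 2 + 2 * int (card (Delta - S))"
    by (intro twentyfour_nsub_4_zero_eq_corr4) (simp add: Delta_def)
  have Delta3: "corr3 (indicator (Delta :: (bit ^ 'r) set)) (indicator Delta) (indicator Delta) = (?N - 1) * (?N - 2)"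
    using corr3_indicator_Delta_Delta[of "Delta :: (bit ^ 'r) set"] int_card_Delta_diff[of "{} :: (bit ^ 'r) set"]
    by simp
  have Delta4: "corr4 (indicator (Delta :: (bit ^ 'r) set)) (indicator Delta) (indicator Delta) (indicator Delta)
      = (?N - 1) * ((?N - 2) * (?N - 1) + 1)"
    using corr4_indicator_Delta_Delta_Delta[of "Delta :: (bit ^ 'r) set"]
      int_card_Delta_diff[of "{} :: (bit ^ 'r) set"]
    by simp
  show ?thesis
    unfolding right_diff_distrib S T3 T4 corr3_indicator_complement[OF assms]
      corr4_indicator_complement[OF assms] Delta3 Delta4 int_card_Delta_diff[OF assms]
    by (simp add: algebra_simps power2_eq_square power3_eq_cube)
qed

lemma two_nsub_2_diff_partition:
  fixes U T Z :: "(bit ^ 'r) set"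
  assumes "p \<noteq> 0" and Z_closed: "\<And>z. z \<in> Z \<Longrightarrow> z + p \<in> Z"
    and "U \<inter> Z = {}" "T \<inter> Z = {}" "U \<inter> T = {}" and partition: "U \<union> T \<union> Z = UNIV"
  shows "2 * (int (nsub 2 U {p}) - int (nsub 2 T {p})) = int (card Z) - int CARD(bit ^ 'r) + 2 * int (card U)"
proof -
  have Z_iff: "x \<in> Z \<longleftrightarrow> x + p \<in> Z" for x
    using Z_closed[of x] Z_closed[of "x + p"] by auto
  have pointwise: "indicator U x * indicator U (x + p)
      = indicator T x * indicator T (x + p) + 1 - indicator T x - indicator T (x + p) - (indicator Z x :: int)" for x
    using assms Z_iff[of x] by (auto simp: indicator_def)
  have "(\<Sum>x\<in>UNIV. indicator T (x + p) :: int) = int (card T)"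
    using sum_translate[of "indicator T :: _ \<Rightarrow> int" p] by (simp add: add.commute sum_UNIV_indicator)
  then have "(\<Sum>x\<in>UNIV. indicator U x * indicator U (x + p))
      = (\<Sum>x\<in>UNIV. indicator T x * indicator T (x + p)) + int CARD(bit ^ 'r)
        - 2 * int (card T) - (int (card Z) :: int)"
    by (simp add: pointwise sum.distrib sum_subtractf sum_UNIV_indicator)
  moreover have "int (card U) + int (card T) + int (card Z) = int CARD(bit ^ 'r)"
  proof -
    have "card (U \<union> T \<union> Z) = card U + card T + card Z"
      using \<open>U \<inter> Z = {}\<close> \<open>T \<inter> Z = {}\<close> \<open>U \<inter> T = {}\<close>
      by (simp add: card_Un_disjoint Int_Un_distrib2)
    then show ?thesis
      using partition by (metis of_nat_add)
  qed
  ultimately show ?thesis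
    using two_nsub_2_eq_sum_indicator[OF \<open>p \<noteq> 0\<close>, of U] two_nsub_2_eq_sum_indicator[OF \<open>p \<noteq> 0\<close>, of T]
    by (smt (verit))
qed

lemma nsub_Un_disjoint:
  "P \<inter> Q = {} \<Longrightarrow> nsub m X (P \<union> Q) = nsub m X P + nsub m X Q"
proof -
  assume "P \<inter> Q = {}"
  then have "card ({Y. Y \<subseteq> X \<and> card Y = m \<and> sum id Y \<in> P} \<union> {Y. Y \<subseteq> X \<and> card Y = m \<and> sum id Y \<in> Q})
      = card {Y. Y \<subseteq> X \<and> card Y = m \<and> sum id Y \<in> P} + card {Y. Y \<subseteq> X \<and> card Y = m \<and> sum id Y \<in> Q}"
    by (intro card_Un_disjoint) auto
  moreover have "{Y. Y \<subseteq> X \<and> card Y = m \<and> sum id Y \<in> P \<union> Q}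
      = {Y. Y \<subseteq> X \<and> card Y = m \<and> sum id Y \<in> P} \<union> {Y. Y \<subseteq> X \<and> card Y = m \<and> sum id Y \<in> Q}"
    by blast
  ultimately show ?thesis
    unfolding nsub_def by simp
qed

lemma nsub_2_pair_complement:
  fixes U :: "(bit ^ 'r) set"
  assumes "a \<noteq> 0" "c \<noteq> 0" "a \<noteq> c" and disjoint: "U \<inter> {0, a, c, a + c} = {}"
  shows "int (nsub 2 U {a, a + c}) - int (nsub 2 (Delta - insert c U - {a, a + c}) {a, a + c})
    = 4 - int CARD(bit ^ 'r) + 2 * int (card U)"
proof -
  let ?Z = "{0, a, c, a + c}" and ?T = "Delta - insert c U - {a, a + c}"
  have "a + c \<noteq> 0" "a + c \<noteq> a" "a + c \<noteq> c"
    using assms by (simp_all add: bitvec_add_eq_0_iff)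
  then have card_Z: "card ?Z = 4"
    using assms by auto
  have pair_count: "2 * (int (nsub 2 U {p}) - int (nsub 2 ?T {p}))
      = int (card ?Z) - int CARD(bit ^ 'r) + 2 * int (card U)"
    if "p \<in> {a, a + c}" for p
  proof (rule two_nsub_2_diff_partition)
    show "p \<noteq> 0"
      using that \<open>a \<noteq> 0\<close> \<open>a + c \<noteq> 0\<close> by auto
    show "z + p \<in> ?Z" if "z \<in> ?Z" for z
      using that \<open>p \<in> {a, a + c}\<close> by (auto simp: add.commute[of c a])
    show "U \<inter> ?Z = {}"
      by (fact disjoint)
    show "?T \<inter> ?Z = {}" "U \<inter> ?T = {}" "U \<union> ?T \<union> ?Z = UNIV"
      by (auto simp: Delta_def)
  qed
  have split: "nsub 2 X {a, a + c} = nsub 2 X {a} + nsub 2 X {a + c}" for X :: "(bit ^ 'r) set"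
    using nsub_Un_disjoint[of "{a}" "{a + c}" 2 X] \<open>a + c \<noteq> a\<close>
    by (metis insert_is_Un disjoint_insert(2) inf_bot_right singletonD)
  show ?thesis
    using pair_count[of a] pair_count[of "a + c"] card_Z unfolding split of_nat_add by simp
qed

lemma independent_add_neq:
  fixes a c d :: "'a :: field ^ 'n"
  assumes "vec.independent B" "a \<in> B" "c \<in> B" "d \<in> B" "d \<noteq> a" "d \<noteq> c"
  shows "a + c \<noteq> d"
proof
  assume "a + c = d"
  moreover have "a + c \<in> vec.span (B - {d})"
    using assms by (intro vec.span_add vec.span_base) auto
  ultimately show False
    using assms(1,4) vec.dependent_def by blast
qed

lemma design_card_image: "design n b \<Longrightarrow> A \<subseteq> {1..n} \<Longrightarrow> card (b ` A) = card A"
  unfolding design_def by (meson card_image inj_on_subset)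

lemma design_pair_count:
  fixes b :: "nat \<Rightarrow> bit ^ 'r"
  assumes "design n b" and ij: "i \<in> {1..n}" "j \<in> {1..n}" "i \<noteq> j"
    and U: "U \<subseteq> {1..n}" "i \<notin> U" "j \<notin> U" and "b i + b j \<notin> b ` U"
  shows "int (nsub 2 (b ` U) {b i, b i + b j})
      - int (nsub 2 (Delta - insert (b j) (b ` U) - {b i, b i + b j}) {b i, b i + b j})
    = 4 - int CARD(bit ^ 'r) + 2 * int (card U)"
proof -
  have inj: "inj_on b {1..n}" and nonzero: "\<And>k. k \<in> {1..n} \<Longrightarrow> b k \<noteq> 0"
    using assms(1) unfolding design_def Delta_def by auto
  have "int (nsub 2 (b ` U) {b i, b i + b j})
      - int (nsub 2 (Delta - insert (b j) (b ` U) - {b i, b i + b j}) {b i, b i + b j})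
    = 4 - int CARD(bit ^ 'r) + 2 * int (card (b ` U))"
  proof (rule nsub_2_pair_complement)
    show "b i \<noteq> 0" "b j \<noteq> 0"
      using nonzero ij by auto
    show "b i \<noteq> b j"
      using inj ij by (meson inj_on_contraD)
    show "b ` U \<inter> {0, b i, b j, b i + b j} = {}"
      using assms nonzero inj_on_image_mem_iff[OF inj] by auto
  qed
  then show ?thesis
    using design_card_image[OF assms(1) U(1)] by simp
qed

lemma A1_3_eq:
  fixes b :: "nat \<Rightarrow> bit ^ 'r"
  assumes "design n b" "4 \<le> n"
  shows "6 * (int (A1 n b 3) + int (AT 3 (Ttil n b)))
    = (int CARD(bit ^ 'r) - 1) * (int CARD(bit ^ 'r) - 2) - 3 * (int n - 2) * (int CARD(bit ^ 'r) + 1 - int n)"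
proof -
  let ?S = "b ` ({2} \<union> {4..n})"
  have S: "?S \<subseteq> Delta" and card_S: "int (card ?S) = int n - 2"
    using assms design_card_image[of n b "{2} \<union> {4..n}"] by (auto simp: design_def)
  show ?thesis
    using six_nsub_3_zero_complement[OF S]
    unfolding int_card_Delta_diff[OF S] card_S A1_def AT_def Ttil_def by (simp add: algebra_simps)
qed

lemma A1_4_eq:
  fixes b :: "nat \<Rightarrow> bit ^ 'r"
  assumes "design n b" "4 \<le> n"
  shows "24 * (int (A1 n b 4) - int (AT 3 (Ttil n b)) - int (AT 4 (Ttil n b)))
    = 4 * (int n - 2) ^ 3 - 6 * int CARD(bit ^ 'r) * (int n - 2) ^ 2
      + (4 * int CARD(bit ^ 'r) ^ 2 - 6 * int CARD(bit ^ 'r) + 4) * (int n - 2)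
      - int CARD(bit ^ 'r) * (int CARD(bit ^ 'r) - 1) * (int CARD(bit ^ 'r) - 2)"
proof -
  let ?S = "b ` ({2} \<union> {4..n})"
  have S: "?S \<subseteq> Delta" and card_S: "int (card ?S) = int n - 2"
    using assms design_card_image[of n b "{2} \<union> {4..n}"] by (auto simp: design_def)
  show ?thesis
    using twentyfour_nsub_4_zero_complement[OF S]
    unfolding card_S A1_def AT_def Ttil_def .
qed

lemma A2_2_eq:
  fixes b :: "nat \<Rightarrow> bit ^ 'r"
  assumes "design n b" "4 \<le> n" "vec.independent {b 1, b 2, b 3, b 4}"
    "b 1 + b 2 \<notin> b ` {5..n}" "b 3 + b 4 \<notin> b ` {5..n}"
  shows "int (A2 n b 2) = 2 * (4 - int CARD(bit ^ 'r) + 2 * (int n - 3))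
    + int (nsub 2 (T12 n b) {b 1, b 1 + b 2}) + int (nsub 2 (T34 n b) {b 3, b 3 + b 4})"
proof -
  have distinct: "b k \<noteq> b l" if "k \<in> {1..n}" "l \<in> {1..n}" "k \<noteq> l" for k l
    using assms(1) that unfolding design_def by (meson inj_on_contraD)
  have "b 1 + b 2 \<noteq> b 4" "b 3 + b 4 \<noteq> b 2"
    by (rule independent_add_neq[OF assms(3)]; use assms(2) distinct in auto)+
  moreover have split: "{4..n} = insert 4 {5..n}"
    using assms(2) by auto
  ultimately have "b 1 + b 2 \<notin> b ` {4..n}" "b 3 + b 4 \<notin> b ` ({2} \<union> {5..n})"
    using assms(4,5) by auto
  moreover have "T12 n b = Delta - insert (b 2) (b ` {4..n}) - {b 1, b 1 + b 2}"
    "T34 n b = Delta - insert (b 4) (b ` ({2} \<union> {5..n})) - {b 3, b 3 + b 4}"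
    unfolding T12_def T34_def Ttil_def split by auto
  ultimately have "int (A21 n b 2) - int (nsub 2 (T12 n b) {b 1, b 1 + b 2}) = 4 - int CARD(bit ^ 'r) + 2 * (int n - 3)"
    "int (A22 n b 2) - int (nsub 2 (T34 n b) {b 3, b 3 + b 4}) = 4 - int CARD(bit ^ 'r) + 2 * (int n - 3)"
    using design_pair_count[OF assms(1), of 1 2 "{4..n}"] design_pair_count[OF assms(1), of 3 4 "{2} \<union> {5..n}"]
      assms(2)
    unfolding A21_def A22_def by auto
  then show ?thesis
    unfolding A2_def by simp
qed

theorem theorem4:
  fixes n :: nat
  assumes "n \<ge> 4"
  shows "\<exists>c1 c2 c3 :: int. \<forall>b :: nat \<Rightarrow> bit ^ 'r. design n b \<longrightarrow>
    int (A1 n b 3) = c1 - int (AT 3 (Ttil n b))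
  \<and> int (A1 n b 4) = c2 + int (AT 3 (Ttil n b)) + int (AT 4 (Ttil n b))
  \<and> (vec.independent {b 1, b 2, b 3, b 4} \<and> card {b 1, b 2, b 3, b 4} = 4
       \<and> b 1 + b 2 \<notin> b ` {5..n} \<and> b 3 + b 4 \<notin> b ` {5..n}
     \<longrightarrow> int (A2 n b 2) = c3 + int (nsub 2 (T12 n b) {b 1, b 1 + b 2})
                             + int (nsub 2 (T34 n b) {b 3, b 3 + b 4}))"
proof (intro exI allI impI conjI)
  let ?N = "int CARD(bit ^ 'r)" and ?s = "int n - 2"
  fix b :: "nat \<Rightarrow> bit ^ 'r"
  assume design: "design n b"
  show "int (A1 n b 3) = ((?N - 1) * (?N - 2) - 3 * ?s * (?N + 1 - int n)) div 6 - int (AT 3 (Ttil n b))"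
    unfolding A1_3_eq[OF design assms, symmetric] by simp
  show "int (A1 n b 4) = (4 * ?s ^ 3 - 6 * ?N * ?s ^ 2 + (4 * ?N ^ 2 - 6 * ?N + 4) * ?s
      - ?N * (?N - 1) * (?N - 2)) div 24 + int (AT 3 (Ttil n b)) + int (AT 4 (Ttil n b))"
    unfolding A1_4_eq[OF design assms, symmetric] by simp
  assume "vec.independent {b 1, b 2, b 3, b 4} \<and> card {b 1, b 2, b 3, b 4} = 4
    \<and> b 1 + b 2 \<notin> b ` {5..n} \<and> b 3 + b 4 \<notin> b ` {5..n}"
  then show "int (A2 n b 2) = 2 * (4 - ?N + 2 * (int n - 3)) + int (nsub 2 (T12 n b) {b 1, b 1 + b 2})
      + int (nsub 2 (T34 n b) {b 3, b 3 + b 4})"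
    using A2_2_eq[OF design assms] by blast
qed

end
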